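(* Let $q=p^m$ with $p$ an odd prime, $q\equiv 1\pmod 3$, $q\geq 13$. In the graph $C_P(q)$: (a) for all nonzero $r,s\in GF(q)$, the induced subgraphs $[P_r]$ and $[P_s]$ are isomorphic; (b) for every nonzero $r$ and distinct $i,j\in GF(q)$, the edge set of $[B_i(r)\cup B_j(r)]$ is a perfect matching between $B_i(r)$ and $B_j(r)$; (c) for every nonzero $r$, $[P_r]$ is regular of degree $q-1$; (d) for every non-isolated vertex $v$ of $C_P(q)$, the subgraph induced by the set $N(v)$ of neighbors of $v$ is $2$-regular, i.e. a disjoint union of cycles.
   Context: $PGL(2,q)$ is the group of maps $x\mapsto\frac{ax+b}{cx+d}$ ($a,b,c,d\in GF(q)$, $ad\neq bc$) acting on $GF(q)\cup\{\infty\}$ with the usual conventions ($-d/c\mapsto\infty$, $\infty\mapsto a/c$ if $c\neq0$, $\infty\mapsto\infty$ if $c=0$). For $K,i\in GF(q)$ and $r\in GF(q)\setminus\{0\}$, $f_{K,r,i}$ is the element of $PGL(2,q)$ with $f_{K,r,i}(x)=K+\frac{r}{x-i}$ for $x\notin\{i,\infty\}$, $f_{K,r,i}(\infty)=K$, $f_{K,r,i}(i)=\infty$. For $r\neq0$, $P_r=\{f_{a,r,i}: a,i\in GF(q)\}$ and $B_i(r)=\{f_{a,r,i}:a\in GF(q)\}$. $hd(\pi,\sigma)$ is the number of points at which $\pi,\sigma$ differ. With distinguished element $F=\infty$, $\pi^{\triangle}$ is the permutation with $\pi^{\triangle}(\pi^{-1}(\infty))=\pi(\infty)$, $\pi^{\triangle}(\infty)=\infty$,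 $\pi^{\triangle}(x)=\pi(x)$ otherwise. The contraction graph $C_P(q)$ has vertex set $PGL(2,q)$, with distinct $\pi,\sigma$ adjacent iff $hd(\pi^{\triangle},\sigma^{\triangle})=q-4$. For a vertex set $S$, $[S]$ denotes the induced subgraph of $C_P(q)$ on $S$. *)

theory Defs
  imports Main "HOL-Computational_Algebra.Primes"
begin

text \<open>The projective line GF(q) \<union> {\<infinity>} is modelled as 'a option, with None = \<infinity>.\<close>

definition mob :: "'a::field \<Rightarrow> 'a \<Rightarrow> 'a \<Rightarrow> 'a \<Rightarrow> 'a option \<Rightarrow> 'a option" where
  "mob a b c d z =
     (if c = 0 then
        (case z of None \<Rightarrow> None | Some x \<Rightarrow> Some ((a * x + b) / d))
      else
        (case z of None \<Rightarrow> Some (a / c)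
         | Some x \<Rightarrow> (if c * x + d = 0 then None else Some ((a * x + b) / (c * x + d)))))"

definition PGL2 :: "('a::field option \<Rightarrow> 'a option) set" where
  "PGL2 = {mob a b c d | a b c d. a * d \<noteq> b * c}"

definition fKri :: "'a::field \<Rightarrow> 'a \<Rightarrow> 'a \<Rightarrow> 'a option \<Rightarrow> 'a option" where
  "fKri K r i z = (case z of None \<Rightarrow> Some K
                   | Some x \<Rightarrow> (if x = i then None else Some (K + r / (x - i))))"

definition Pr :: "'a::field \<Rightarrow> ('a option \<Rightarrow> 'a option) set" where
  "Pr r = {fKri a r i | a i. True}"

definition Bir :: "'a::field \<Rightarrow> 'a \<Rightarrow> ('a option \<Rightarrow> 'a option) set" where
  "Bir i r = {fKri a r i | a. True}"

definition hdist :: "('b \<Rightarrow> 'b) \<Rightarrow> ('b \<Rightarrow> 'b) \<Rightarrow> nat" where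
  "hdist \<pi> \<sigma> = card {x. \<pi> x \<noteq> \<sigma> x}"

text \<open>Contraction with distinguished element F = \<infinity> = None.\<close>
definition tri :: "('a option \<Rightarrow> 'a option) \<Rightarrow> 'a option \<Rightarrow> 'a option" where
  "tri \<pi> z = (if z = None then None else if \<pi> z = None then \<pi> None else \<pi> z)"

text \<open>Adjacency in the contraction graph C_P(q), q = CARD('a).\<close>
definition adjC :: "('a::{finite,field} option \<Rightarrow> 'a option) \<Rightarrow> ('a option \<Rightarrow> 'a option) \<Rightarrow> bool" where
  "adjC \<pi> \<sigma> \<longleftrightarrow> \<pi> \<in> PGL2 \<and> \<sigma> \<in> PGL2 \<and> \<pi> \<noteq> \<sigma> \<and> hdist (tri \<pi>) (tri \<sigma>) = card (UNIV :: 'a set) - 4"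

definition nbhd :: "('a::{finite,field} option \<Rightarrow> 'a option) \<Rightarrow> ('a option \<Rightarrow> 'a option) set" where
  "nbhd v = {u. adjC v u}"

end

theory Submission
  imports Defs "HOL-Computational_Algebra.Polynomial"
begin

text \<open>A map in PGL(2,q) either fixes \<infinity> and is affine, or has the form f_{K,r,i}. After contraction, two
  maps f_{K,r,i} and f_{K',s,j} agree off {i, j} exactly at the roots of a quadratic, and they agree
  at both poles only if r = s = (K - K')(i - j). Hence they agree at four points, i.e. are adjacent,
  iff r = s, i \<noteq> j and (K - K')(i - j) = r: in that case the quadratic is, up to a constant, the
  product (y + \<omega>e)(y + \<omega>^2 e) with y = x - j and e = i - j, where \<omega> is a primitive cube root of unity,
  which exists because q \<equiv> 1 (mod 3). Affine maps agree with any other map in at most three points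
  and are isolated. All four claims are read off this adjacency criterion; scaling all values by
  s/r carries P_r onto P_s.\<close>

definition aff_map :: "'a::field \<Rightarrow> 'a \<Rightarrow> 'a option \<Rightarrow> 'a option" where
  "aff_map a b = map_option (\<lambda>x. a * x + b)"

lemma tri_Some_fKri: "tri (fKri K r i) (Some x) = Some (if x = i then K else K + r / (x - i))"
  by (simp add: tri_def fKri_def)

lemma tri_Some_aff_map: "tri (aff_map a b) (Some x) = Some (a * x + b)"
  by (simp add: tri_def aff_map_def)

lemma fKri_eq_iff: "fKri K r i = fKri K' r' i' \<longleftrightarrow> K = K' \<and> r = r' \<and> i = i'"
proof
  assume eq: "fKri K r i = fKri K' r' i'"
  have K: "K = K'" using fun_cong[OF eq, of None] by (simp add: fKri_def)
  have "fKri K' r' i' (Some i) = None" using fun_cong[OF eq, of "Some i"] by (simp add: fKri_def)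
  then have i: "i = i'" by (simp add: fKri_def split: if_splits)
  have "fKri K r i (Some (i + 1)) = fKri K' r' i' (Some (i + 1))" using eq by simp
  then show "K = K' \<and> r = r' \<and> i = i'" using K i by (simp add: fKri_def)
qed simp

lemma fKri_in_PGL2:
  assumes "r \<noteq> 0"
  shows "fKri K r i \<in> PGL2"
proof -
  have "fKri K r i = mob K (r - K * i) 1 (- i)"
  proof
    fix z show "fKri K r i z = mob K (r - K * i) 1 (- i) z"
      by (cases z) (auto simp: fKri_def mob_def field_simps)
  qed
  moreover have "K * - i \<noteq> (r - K * i) * 1" using assms by simp
  ultimately show ?thesis unfolding PGL2_def by blast
qed

lemma mob_eq_fKri:
  assumes c: "c \<noteq> 0"
  shows "mob a b c d = fKri (a / c) ((b * c - a * d) / c\<^sup>2) (- d / c)"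
proof
  fix z show "mob a b c d z = fKri (a / c) ((b * c - a * d) / c\<^sup>2) (- d / c) z"
  proof (cases z)
    case (Some x)
    have pole: "c * x + d = 0 \<longleftrightarrow> x = - d / c"
      using c by (auto simp: field_simps eq_neg_iff_add_eq_0)
    have "a / c + (b * c - a * d) / c\<^sup>2 / (x - - d / c) = (a * x + b) / (c * x + d)"
      if nz: "c * x + d \<noteq> 0"
    proof -
      have "x - - d / c = (c * x + d) / c" using c by (simp add: field_simps)
      then have "(b * c - a * d) / c\<^sup>2 / (x - - d / c) = (b * c - a * d) / (c * (c * x + d))"
        using c by (simp add: power2_eq_square)
      moreover have "a / c = a * (c * x + d) / (c * (c * x + d))" using nz by simp
      ultimately have "a / c + (b * c - a * d) / c\<^sup>2 / (x - - d / c)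
          = (a * (c * x + d) + (b * c - a * d)) / (c * (c * x + d))"
        by (simp only: add_divide_distrib)
      also have "\<dots> = (c * (a * x + b)) / (c * (c * x + d))" by (simp add: algebra_simps)
      finally show ?thesis using c by simp
    qed
    then show ?thesis using c pole by (auto simp: Some mob_def fKri_def)
  qed (use c in \<open>simp add: mob_def fKri_def\<close>)
qed

lemma PGL2E:
  assumes "\<pi> \<in> PGL2"
  obtains a b where "a \<noteq> 0" "\<pi> = aff_map a b"
    | K r i where "r \<noteq> 0" "\<pi> = fKri K r i"
proof -
  obtain a b c d where \<pi>: "\<pi> = mob a b c d" and det: "a * d \<noteq> b * c"
    using assms unfolding PGL2_def by blast
  show thesis
  proof (cases "c = 0")
    case True
    then have "a / d \<noteq> 0" "d \<noteq> 0" using det by auto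
    moreover have "\<pi> = aff_map (a / d) (b / d)"
    proof
      fix z show "\<pi> z = aff_map (a / d) (b / d) z"
        using True \<open>d \<noteq> 0\<close> by (cases z) (simp_all add: \<pi> mob_def aff_map_def field_simps)
    qed
    ultimately show thesis using that(1) by blast
  next
    case False
    have "(b * c - a * d) / c\<^sup>2 \<noteq> 0" using det False by auto
    then show thesis using that(2) mob_eq_fKri[OF False] \<pi> by blast
  qed
qed

definition agree_set :: "('a option \<Rightarrow> 'a option) \<Rightarrow> ('a option \<Rightarrow> 'a option) \<Rightarrow> 'a set" where
  "agree_set \<pi> \<sigma> = {x. tri \<pi> (Some x) = tri \<sigma> (Some x)}"

lemma hdist_tri_eq:
  fixes \<pi> \<sigma> :: "'a::{finite,field} option \<Rightarrow> 'a option"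
  shows "hdist (tri \<pi>) (tri \<sigma>) = card (UNIV :: 'a set) - card (agree_set \<pi> \<sigma>)"
proof -
  have "{z. tri \<pi> z \<noteq> tri \<sigma> z} = Some ` (- agree_set \<pi> \<sigma>)"
  proof (rule set_eqI)
    fix z show "z \<in> {z. tri \<pi> z \<noteq> tri \<sigma> z} \<longleftrightarrow> z \<in> Some ` (- agree_set \<pi> \<sigma>)"
      by (cases z) (auto simp: agree_set_def tri_def)
  qed
  then have "hdist (tri \<pi>) (tri \<sigma>) = card (- agree_set \<pi> \<sigma>)"
    unfolding hdist_def by (simp add: card_image)
  then show ?thesis by (simp add: Compl_eq_Diff_UNIV card_Diff_subset)
qed

lemma adjC_iff_card_agree_set:
  fixes \<pi> \<sigma> :: "'a::{finite,field} option \<Rightarrow> 'a option"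
  assumes "card (UNIV :: 'a set) \<ge> 4"
  shows "adjC \<pi> \<sigma> \<longleftrightarrow> \<pi> \<in> PGL2 \<and> \<sigma> \<in> PGL2 \<and> \<pi> \<noteq> \<sigma> \<and> card (agree_set \<pi> \<sigma>) = 4"
proof -
  have "card (agree_set \<pi> \<sigma>) \<le> card (UNIV :: 'a set)" by (rule card_mono) auto
  then show ?thesis using assms unfolding adjC_def hdist_tri_eq by auto
qed

lemma adjC_sym: "adjC \<pi> \<sigma> \<longleftrightarrow> adjC \<sigma> \<pi>"
  unfolding adjC_def hdist_def by (auto simp: eq_commute)

lemma card_quadratic_roots_le:
  fixes a b c :: "'a::field"
  assumes "a \<noteq> 0 \<or> b \<noteq> 0 \<or> c \<noteq> 0"
  shows "card {x. a * x * x + b * x + c = 0} \<le> 2"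
proof -
  have "{x. a * x * x + b * x + c = 0} = {x. poly [:c, b, a:] x = 0}"
    by (auto simp: algebra_simps)
  also have "card \<dots> \<le> degree [:c, b, a:]"
    using assms by (intro card_poly_roots_bound) auto
  also have "\<dots> \<le> 2" by simp
  finally show ?thesis .
qed

lemma agree_set_fKri_off_poles:
  assumes "x \<noteq> i" "x \<noteq> j"
  shows "x \<in> agree_set (fKri K r i) (fKri K' s j)
    \<longleftrightarrow> (K - K') * (x - i) * (x - j) + r * (x - j) - s * (x - i) = 0"
proof -
  have "x \<in> agree_set (fKri K r i) (fKri K' s j) \<longleftrightarrow> (K + r / (x - i)) - (K' + s / (x - j)) = 0"
    using assms by (simp add: agree_set_def tri_Some_fKri)
  also have "(K + r / (x - i)) - (K' + s / (x - j))
      = ((K - K') * (x - i) * (x - j) + r * (x - j) - s * (x - i)) / ((x - i) * (x - j))"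
    using assms by (simp add: field_simps)
  finally show ?thesis using assms by simp
qed

lemma pole_in_agree_set_fKri:
  assumes "i \<noteq> j"
  shows "i \<in> agree_set (fKri K r i) (fKri K' s j) \<longleftrightarrow> (K - K') * (i - j) = s"
    and "j \<in> agree_set (fKri K r i) (fKri K' s j) \<longleftrightarrow> (K - K') * (i - j) = r"
  using assms by (auto simp: agree_set_def tri_Some_fKri field_simps)

lemma card_agree_set_fKri_off_poles_le:
  fixes K K' r s i j :: "'a::{finite,field}"
  assumes r: "r \<noteq> 0" and ne: "fKri K r i \<noteq> fKri K' s j"
  shows "card (agree_set (fKri K r i) (fKri K' s j) - {i, j}) \<le> 2"
proof -
  define d where "d = K - K'"
  have nz: "d \<noteq> 0 \<or> r - s - d * (i + j) \<noteq> 0 \<or> d * i * j - r * j + s * i \<noteq> 0"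
  proof (rule ccontr)
    assume "\<not> ?thesis"
    then have "d = 0" "r = s" "r * (i - j) = 0" by (auto simp: algebra_simps)
    then show False using r ne by (simp add: d_def)
  qed
  have "agree_set (fKri K r i) (fKri K' s j) - {i, j}
      \<subseteq> {x. d * x * x + (r - s - d * (i + j)) * x + (d * i * j - r * j + s * i) = 0}"
    by (auto simp: agree_set_fKri_off_poles d_def algebra_simps)
  from card_mono[OF _ this] card_quadratic_roots_le[OF nz] show ?thesis by simp
qed

lemma card_agree_set_fKri_le_3:
  fixes K K' r s i j :: "'a::{finite,field}"
  assumes r: "r \<noteq> 0" and ne: "fKri K r i \<noteq> fKri K' s j"
    and not_adj: "\<not> (r = s \<and> i \<noteq> j \<and> (K - K') * (i - j) = r)"
  shows "card (agree_set (fKri K r i) (fKri K' s j)) \<le> 3"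
proof -
  let ?A = "agree_set (fKri K r i) (fKri K' s j)"
  have "i \<notin> ?A \<or> j \<notin> ?A \<or> i = j" 
    using not_adj by (cases "i = j") (auto simp: pole_in_agree_set_fKri)
  then have "?A \<inter> {i, j} \<subseteq> {i} \<or> ?A \<inter> {i, j} \<subseteq> {j}" by auto
  then have "card (?A \<inter> {i, j}) \<le> 1" 
    using card_mono[where B = "{i}"] card_mono[where B = "{j}"] by force
  moreover have "card ?A = card (?A \<inter> {i, j}) + card (?A - {i, j})"
    by (rule card_Int_Diff) simp
  ultimately show ?thesis using card_agree_set_fKri_off_poles_le[OF r ne] by linarith
qed

lemma card_agree_set_aff_map_le_3:
  fixes a b :: "'a::{finite,field}"
  assumes a: "a \<noteq> 0" and \<sigma>: "\<sigma> \<in> PGL2" and ne: "aff_map a b \<noteq> \<sigma>"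
  shows "card (agree_set (aff_map a b) \<sigma>) \<le> 3"
  using \<sigma>
proof (cases rule: PGL2E)
  case (1 a' b')
  have "a - a' \<noteq> 0 \<or> b - b' \<noteq> 0" using ne 1 by auto
  then have "card {x. 0 * x * x + (a - a') * x + (b - b') = 0} \<le> 2"
    by (intro card_quadratic_roots_le) auto
  moreover have "agree_set (aff_map a b) \<sigma> = {x. 0 * x * x + (a - a') * x + (b - b') = 0}"
    by (auto simp: 1 agree_set_def tri_Some_aff_map algebra_simps)
  ultimately show ?thesis by simp
next
  case (2 K s j)
  let ?R = "{x. a * x * x + (b - K - a * j) * x + (- (b - K) * j - s) = 0}"
  have "agree_set (aff_map a b) \<sigma> \<subseteq> insert j ?R"
  proof
    fix x assume x: "x \<in> agree_set (aff_map a b) \<sigma>"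
    show "x \<in> insert j ?R"
    proof (cases "x = j")
      case False
      then have "a * x + b - (K + s / (x - j)) = 0"
        using x by (simp add: 2 agree_set_def tri_Some_aff_map tri_Some_fKri)
      moreover have "a * x + b - (K + s / (x - j))
          = (a * x * x + (b - K - a * j) * x + (- (b - K) * j - s)) / (x - j)"
        using False by (simp add: field_simps)
      ultimately show ?thesis using False by simp
    qed simp
  qed
  then have "card (agree_set (aff_map a b) \<sigma>) \<le> card (insert j ?R)"
    by (intro card_mono) auto
  also have "\<dots> \<le> Suc (card ?R)" by (simp add: card_insert_if)
  also have "card ?R \<le> 2" by (rule card_quadratic_roots_le) (use a in simp)
  finally show ?thesis by simp
qed

lemma not_adjC_aff_map:
  fixes \<sigma> :: "'a::{finite,field} option \<Rightarrow> 'a option"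
  assumes "card (UNIV :: 'a set) \<ge> 4" and "a \<noteq> 0"
  shows "\<not> adjC (aff_map a b) \<sigma>"
  using card_agree_set_aff_map_le_3[OF assms(2)] adjC_iff_card_agree_set[OF assms(1)] by fastforce

lemma adjC_imp_fKri:
  fixes \<pi> \<sigma> :: "'a::{finite,field} option \<Rightarrow> 'a option"
  assumes "card (UNIV :: 'a set) \<ge> 4" and "adjC \<pi> \<sigma>"
  obtains K r i where "r \<noteq> 0" "\<sigma> = fKri K r i"
proof -
  have "\<sigma> \<in> PGL2" using assms(2) by (simp add: adjC_def)
  then show thesis
  proof (cases rule: PGL2E)
    case (1 a b)
    then show ?thesis using not_adjC_aff_map[OF assms(1)] assms(2) adjC_sym by metis
  qed (use that in blast)
qed

lemma finite_field_fermat: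
  fixes a :: "'a::{finite,field}"
  assumes a: "a \<noteq> 0"
  shows "a ^ (card (UNIV :: 'a set) - 1) = 1"
proof -
  let ?U = "UNIV - {0 :: 'a}"
  have "bij_betw (\<lambda>x. a * x) ?U ?U"
    by (rule bij_betw_byWitness[where f' = "\<lambda>x. x / a"]) (use a in auto)
  then have "prod id ?U = prod (\<lambda>x. a * x) ?U"
    using prod.reindex_bij_betw[of "\<lambda>x. a * x" ?U ?U id] by simp
  also have "\<dots> = a ^ card ?U * prod id ?U" by (simp add: prod.distrib)
  finally have "a ^ card ?U = 1" by simp
  then show ?thesis by (simp add: card_Diff_subset)
qed

text \<open>With q - 1 = 3n, the polynomial X^n - 1 has fewer than q - 1 roots,
  so some a \<noteq> 0 has a^n \<noteq> 1, and a^n is a cube root of unity other than 1.\<close>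
lemma primitive_cube_root_exists:
  assumes q: "card (UNIV :: 'a::{finite,field} set) mod 3 = 1"
  obtains w :: "'a::{finite,field}" where "w * w + w + 1 = 0" "w \<noteq> 1"
proof -
  define n where "n = (card (UNIV :: 'a set) - 1) div 3"
  have "card {0, 1 :: 'a} \<le> card (UNIV :: 'a set)" by (rule card_mono) auto
  then have n: "3 * n = card (UNIV :: 'a set) - 1" "n \<ge> 1"
    using q unfolding n_def by simp_all presburger+
  let ?p = "monom (1 :: 'a) n - 1"
  have "coeff ?p n = 1" using n by simp
  then have "?p \<noteq> 0" by (metis coeff_0 zero_neq_one)
  moreover have "degree ?p \<le> n"
    by (rule order.trans[OF degree_diff_le_max]) (simp add: degree_monom_le)
  ultimately have "card {x :: 'a. x ^ n = 1} \<le> n"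
    using card_poly_roots_bound[of ?p] by (simp add: poly_monom)
  moreover have "card (UNIV - {0 :: 'a}) = 3 * n" using n by (simp add: card_Diff_subset)
  ultimately have "\<not> UNIV - {0 :: 'a} \<subseteq> {x. x ^ n = 1}"
    using n card_mono[of "{x :: 'a. x ^ n = 1}" "UNIV - {0}"] by auto
  then obtain a :: 'a where a: "a \<noteq> 0" "a ^ n \<noteq> 1" by auto
  have "(a ^ n) ^ 3 = 1" using finite_field_fermat[OF a(1)] n
    by (simp add: power_mult[symmetric] mult.commute)
  then have "(a ^ n - 1) * (a ^ n * a ^ n + a ^ n + 1) = 0"
    by (simp add: algebra_simps power3_eq_cube)
  then show thesis using that a(2) by auto
qed

lemma scale_fKri: "map_option ((*) c) \<circ> fKri K r i = fKri (c * K) (c * r) i"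
proof
  fix z show "(map_option ((*) c) \<circ> fKri K r i) z = fKri (c * K) (c * r) i z"
    by (cases z) (auto simp: fKri_def distrib_left)
qed

definition fKri_neighbour :: "'a::field \<Rightarrow> 'a \<Rightarrow> 'a \<Rightarrow> 'a \<Rightarrow> 'a option \<Rightarrow> 'a option" where
  "fKri_neighbour K r i j = fKri (K + r / (j - i)) r j"

locale primitive_cube_root =
  fixes w :: "'a::{finite,field}"
  assumes cube_root: "w * w + w + 1 = 0" and ne_1: "w \<noteq> 1"
begin

lemma ne_0: "w \<noteq> 0"
  using cube_root by auto

lemma square_ne_self: "w * w \<noteq> w"
proof
  assume "w * w = w"
  then have "w * (w - 1) = 0" by (simp add: algebra_simps)
  then show False using ne_0 ne_1 by simp
qed

lemma factorization: "(y - e) * y + e * e = (y + w * e) * (y + w * w * e)"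
proof -
  have "(y + w * e) * (y + w * w * e)
      = (y - e) * y + e * e + (w * w + w + 1) * (e * y + (w - 1) * e * e)"
    by (simp add: algebra_simps)
  then show ?thesis using cube_root by simp
qed

lemma plus_1_ne_0: "w + 1 \<noteq> 0"
proof -
  have "w + 1 = - (w * w)" using cube_root by (simp add: eq_neg_iff_add_eq_0 algebra_simps)
  then show ?thesis using ne_0 by simp
qed

lemma square_plus_1_ne_0: "w * w + 1 \<noteq> 0"
proof -
  have "w * w + 1 = - w" using cube_root by (simp add: eq_neg_iff_add_eq_0 algebra_simps)
  then show ?thesis using ne_0 by simp
qed

lemma card_cube_root_points: "card {0, 1, - w, - w * w} = 4"
proof -
  have "distinct [0, 1, - w, - w * w]"
    using ne_0 square_ne_self plus_1_ne_0 square_plus_1_ne_0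
    by (auto simp: eq_neg_iff_add_eq_0 add.commute)
  then show ?thesis by (simp add: distinct_card[symmetric])
qed

lemma card_UNIV_ge_4: "card (UNIV :: 'a set) \<ge> 4"
  using card_mono[of UNIV "{0, 1, - w, - w * w}"] card_cube_root_points by simp

lemma agree_set_fKri_adjacent:
  assumes r: "r \<noteq> 0" and ij: "i \<noteq> j" and rel: "(K - K') * (i - j) = r"
  shows "agree_set (fKri K r i) (fKri K' r j) = (\<lambda>t. j + t * (i - j)) ` {0, 1, - w, - w * w}"
proof (rule set_eqI)
  fix x
  show "x \<in> agree_set (fKri K r i) (fKri K' r j) \<longleftrightarrow> x \<in> (\<lambda>t. j + t * (i - j)) ` {0, 1, - w, - w * w}"
  proof (cases "x = i \<or> x = j")
    case True
    then show ?thesis using pole_in_agree_set_fKri[OF ij] rel by auto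
  next
    case False
    define e y where "e = i - j" and "y = x - j"
    have "(K - K') * (x - i) * (x - j) + r * (x - j) - r * (x - i) = (K - K') * ((y - e) * y + e * e)"
      unfolding e_def y_def rel[symmetric] by (simp add: algebra_simps)
    then have "x \<in> agree_set (fKri K r i) (fKri K' r j) \<longleftrightarrow> (K - K') * ((y - e) * y + e * e) = 0"
      using False by (simp add: agree_set_fKri_off_poles)
    also have "\<dots> \<longleftrightarrow> y = - w * e \<or> y = - w * w * e"
      using r rel by (auto simp: factorization eq_neg_iff_add_eq_0)
    also have "\<dots> \<longleftrightarrow> x \<in> (\<lambda>t. j + t * (i - j)) ` {0, 1, - w, - w * w}"
      using False by (auto simp: e_def y_def algebra_simps)
    finally show ?thesis .
  qed
qed

lemma card_agree_set_fKri_adjacent: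
  fixes K K' r i j :: 'a
  assumes "r \<noteq> 0" "i \<noteq> j" and "(K - K') * (i - j) = r"
  shows "card (agree_set (fKri K r i) (fKri K' r j)) = 4"
proof -
  have "inj_on (\<lambda>t. j + t * (i - j)) {0, 1, - w, - w * w}"
    using assms(2) by (intro inj_onI) simp
  then show ?thesis
    by (simp only: agree_set_fKri_adjacent[OF assms] card_image card_cube_root_points)
qed

lemma adjC_fKri_iff:
  fixes K K' r s i j :: 'a
  assumes r: "r \<noteq> 0" and s: "s \<noteq> 0"
  shows "adjC (fKri K r i) (fKri K' s j) \<longleftrightarrow> r = s \<and> i \<noteq> j \<and> (K - K') * (i - j) = r"
proof
  assume "adjC (fKri K r i) (fKri K' s j)"
  then have "card (agree_set (fKri K r i) (fKri K' s j)) = 4" "fKri K r i \<noteq> fKri K' s j"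
    by (simp_all add: adjC_iff_card_agree_set[OF card_UNIV_ge_4])
  then show "r = s \<and> i \<noteq> j \<and> (K - K') * (i - j) = r"
    using card_agree_set_fKri_le_3[OF r] by fastforce
next
  assume adj: "r = s \<and> i \<noteq> j \<and> (K - K') * (i - j) = r"
  then have "card (agree_set (fKri K r i) (fKri K' s j)) = 4"
    using card_agree_set_fKri_adjacent[OF r] by auto
  moreover have "fKri K r i \<noteq> fKri K' s j" using adj by (simp add: fKri_eq_iff)
  ultimately show "adjC (fKri K r i) (fKri K' s j)"
    by (simp add: adjC_iff_card_agree_set[OF card_UNIV_ge_4] fKri_in_PGL2 r s)
qed

lemma Pr_isomorphic:
  fixes r s :: 'a
  assumes r: "r \<noteq> 0" and s: "s \<noteq> 0"
  shows "\<exists>\<phi>. bij_betw \<phi> (Pr r) (Pr s) \<and> (\<forall>u\<in>Pr r. \<forall>v\<in>Pr r. adjC u v \<longleftrightarrow> adjC (\<phi> u) (\<phi> v))"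
proof -
  define c where "c = s / r"
  have c: "c \<noteq> 0" "c * r = s" using r s by (simp_all add: c_def)
  define \<phi> where "\<phi> u = map_option ((*) c) \<circ> u" for u :: "'a option \<Rightarrow> 'a option"
  have \<phi>: "\<phi> (fKri K r i) = fKri (c * K) s i" for K i
    by (simp add: \<phi>_def scale_fKri c)
  have "inj_on \<phi> (Pr r)"
    using c by (auto intro!: inj_onI simp: Pr_def \<phi> fKri_eq_iff)
  moreover have "\<phi> ` Pr r = Pr s"
  proof
    show "\<phi> ` Pr r \<subseteq> Pr s" unfolding Pr_def using \<phi> by blast
    show "Pr s \<subseteq> \<phi> ` Pr r"
    proof
      fix u assume "u \<in> Pr s"
      then obtain K i where "u = fKri K s i" by (auto simp: Pr_def)
      then have "u = \<phi> (fKri (K / c) r i)" using c by (simp add: \<phi>)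
      then show "u \<in> \<phi> ` Pr r" by (auto simp: Pr_def)
    qed
  qed
  moreover have "adjC u v \<longleftrightarrow> adjC (\<phi> u) (\<phi> v)" if u: "u \<in> Pr r" and v: "v \<in> Pr r" for u v
  proof -
    obtain K i where "u = fKri K r i" using u by (auto simp: Pr_def)
    moreover obtain K' j where "v = fKri K' r j" using v by (auto simp: Pr_def)
    moreover have "(c * K - c * K') * (i - j) = c * ((K - K') * (i - j))"
      by (simp add: algebra_simps)
    then have "(c * K - c * K') * (i - j) = s \<longleftrightarrow> (K - K') * (i - j) = r"
      using c by (simp only: flip: c(2)) simp
    ultimately show ?thesis by (simp add: \<phi> adjC_fKri_iff r s)
  qed
  ultimately show ?thesis by (auto intro: bij_betw_imageI)
qed

lemma Bir_no_edges:
  fixes u v :: "'a option \<Rightarrow> 'a option"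
  assumes "r \<noteq> 0" "u \<in> Bir i r" "v \<in> Bir i r"
  shows "\<not> adjC u v"
  using assms by (auto simp: Bir_def adjC_fKri_iff)

lemma Bir_unique_partner:
  fixes r i j :: 'a
  assumes r: "r \<noteq> 0" and ij: "i \<noteq> j" and u: "u \<in> Bir i r"
  shows "\<exists>!v. v \<in> Bir j r \<and> adjC u v"
proof -
  obtain a where a: "u = fKri a r i" using u by (auto simp: Bir_def)
  have "(a - b) * (i - j) = r \<longleftrightarrow> b = a - r / (i - j)" for b
    using ij by (auto simp: field_simps)
  then show ?thesis
    using ij by (auto simp: a Bir_def adjC_fKri_iff r)
qed

lemma nbhd_fKri:
  fixes K r i :: 'a
  assumes r: "r \<noteq> 0"
  shows "nbhd (fKri K r i) = fKri_neighbour K r i ` (- {i})"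
proof (rule set_eqI)
  fix u
  have K': "(K - K') * (i - j) = r \<longleftrightarrow> K' = K + r / (j - i)" if "j \<noteq> i" for K' j
    using that by (auto simp: field_simps)
  show "u \<in> nbhd (fKri K r i) \<longleftrightarrow> u \<in> fKri_neighbour K r i ` (- {i})"
  proof
    assume "u \<in> nbhd (fKri K r i)"
    then have adj: "adjC (fKri K r i) u" by (simp add: nbhd_def)
    then obtain K' s j where s: "s \<noteq> 0" and u: "u = fKri K' s j"
      by (rule adjC_imp_fKri[OF card_UNIV_ge_4])
    then have "s = r" "j \<noteq> i" "(K - K') * (i - j) = r"
      using adj by (auto simp: adjC_fKri_iff r)
    then have "u = fKri_neighbour K r i j" using K' by (simp add: u fKri_neighbour_def)
    then show "u \<in> fKri_neighbour K r i ` (- {i})" using \<open>j \<noteq> i\<close> by simp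
  next
    assume "u \<in> fKri_neighbour K r i ` (- {i})"
    then obtain j where j: "j \<noteq> i" "u = fKri_neighbour K r i j" by auto
    have "(K - (K + r / (j - i))) * (i - j) = r" using j(1) by (simp add: field_simps)
    then show "u \<in> nbhd (fKri K r i)"
      using j by (simp add: nbhd_def fKri_neighbour_def adjC_fKri_iff r)
  qed
qed

lemma card_Pr_neighbours:
  fixes r :: 'a
  assumes r: "r \<noteq> 0" and v: "v \<in> Pr r"
  shows "card {u \<in> Pr r. adjC v u} = card (UNIV :: 'a set) - 1"
proof -
  obtain K i where v: "v = fKri K r i" using v by (auto simp: Pr_def)
  have "fKri_neighbour K r i ` (- {i}) \<subseteq> Pr r"
    by (auto simp: Pr_def fKri_neighbour_def)
  moreover have "{u \<in> Pr r. adjC v u} = Pr r \<inter> nbhd v" by (auto simp: nbhd_def)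
  ultimately have "{u \<in> Pr r. adjC v u} = fKri_neighbour K r i ` (- {i})"
    by (simp add: v nbhd_fKri[OF r] Int_absorb1)
  moreover have "inj_on (fKri_neighbour K r i) (- {i})"
    by (auto intro!: inj_onI simp: fKri_neighbour_def fKri_eq_iff)
  ultimately show ?thesis by (simp add: card_image Compl_eq_Diff_UNIV card_Diff_subset)
qed

lemma adjC_fKri_neighbour_iff:
  fixes K r i j k :: 'a
  assumes r: "r \<noteq> 0" and j: "j \<noteq> i" and k: "k \<noteq> i"
  shows "adjC (fKri_neighbour K r i j) (fKri_neighbour K r i k)
    \<longleftrightarrow> k = i - w * (j - i) \<or> k = i - w * w * (j - i)"
proof -
  define a b where "a = j - i" and "b = k - i"
  have ab: "a \<noteq> 0" "b \<noteq> 0" using j k by (simp_all add: a_def b_def)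
  have "(r / a - r / b) * (a - b) - r = - r * ((b - a) * b + a * a) / (a * b)"
    using ab by (simp add: field_simps)
  then have "(r / a - r / b) * (a - b) = r \<longleftrightarrow> (b - a) * b + a * a = 0"
    using ab r by (simp add: right_minus_eq[of "(r / a - r / b) * (a - b)", symmetric])
  also have "\<dots> \<longleftrightarrow> b = - w * a \<or> b = - w * w * a"
    by (auto simp: factorization eq_neg_iff_add_eq_0)
  finally have "(r / a - r / b) * (a - b) = r \<longleftrightarrow> b = - w * a \<or> b = - w * w * a" .
  moreover have "j \<noteq> k" if "b = - w * a \<or> b = - w * w * a"
  proof
    assume "j = k"
    then have "(w + 1) * a = 0 \<or> (w * w + 1) * a = 0"
      using that by (auto simp: a_def b_def algebra_simps eq_neg_iff_add_eq_0)
    then show False using ab plus_1_ne_0 square_plus_1_ne_0 by simp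
  qed
  ultimately show ?thesis
    by (auto simp: fKri_neighbour_def adjC_fKri_iff r a_def b_def algebra_simps)
qed

lemma card_adjacent_in_nbhd:
  fixes x v :: "'a option \<Rightarrow> 'a option"
  assumes x: "x \<in> nbhd v"
  shows "card {u \<in> nbhd v. adjC x u} = 2"
proof -
  have "adjC x v" using x by (simp add: nbhd_def adjC_sym)
  then obtain K r i where r: "r \<noteq> 0" and v: "v = fKri K r i"
    by (rule adjC_imp_fKri[OF card_UNIV_ge_4])
  then obtain j where j: "j \<noteq> i" and x: "x = fKri_neighbour K r i j"
    using x nbhd_fKri[OF r] by auto
  define k1 k2 where "k1 = i - w * (j - i)" and "k2 = i - w * w * (j - i)"
  have k: "k1 \<noteq> i" "k2 \<noteq> i" "k1 \<noteq> k2"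
    using j ne_0 square_ne_self by (auto simp: k1_def k2_def)
  have "{u \<in> nbhd v. adjC x u} = fKri_neighbour K r i ` {k1, k2}"
    using k by (auto simp: v x nbhd_fKri[OF r] adjC_fKri_neighbour_iff[OF r j] k1_def k2_def)
  moreover have "fKri_neighbour K r i k1 \<noteq> fKri_neighbour K r i k2"
    using k by (simp add: fKri_neighbour_def fKri_eq_iff)
  ultimately show ?thesis by simp
qed

end

text \<open>Only q \<equiv> 1 (mod 3) is used.\<close>
theorem theorem13:
  fixes q p m :: nat
  assumes card: "card (UNIV :: 'a::{finite,field} set) = q"
    and qpm: "q = p ^ m" and pp: "prime p" and podd: "odd p"
    and q3: "q mod 3 = 1" and q13: "q \<ge> 13"
  shows
    "(\<forall>(r::'a) (s::'a). r \<noteq> 0 \<longrightarrow> s \<noteq> 0 \<longrightarrow>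
        (\<exists>\<phi>. bij_betw \<phi> (Pr r) (Pr s) \<and>
              (\<forall>u\<in>Pr r. \<forall>v\<in>Pr r. adjC u v \<longleftrightarrow> adjC (\<phi> u) (\<phi> v))))
     \<and> (\<forall>(r::'a) i j. r \<noteq> 0 \<longrightarrow> i \<noteq> j \<longrightarrow>
          (\<forall>u\<in>Bir i r. \<forall>v\<in>Bir i r. \<not> adjC u v) \<and>
          (\<forall>u\<in>Bir j r. \<forall>v\<in>Bir j r. \<not> adjC u v) \<and>
          (\<forall>u\<in>Bir i r. \<exists>!v. v \<in> Bir j r \<and> adjC u v) \<and>
          (\<forall>v\<in>Bir j r. \<exists>!u. u \<in> Bir i r \<and> adjC u v))
     \<and> (\<forall>r::'a. r \<noteq> 0 \<longrightarrow> (\<forall>v\<in>Pr r. card {u\<in>Pr r. adjC v u} = q - 1))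
     \<and> (\<forall>v::'a option \<Rightarrow> 'a option. v \<in> PGL2 \<and> nbhd v \<noteq> {} \<longrightarrow>
          (\<forall>w\<in>nbhd v. card {u\<in>nbhd v. adjC w u} = 2))"
proof -
  obtain w :: 'a where "w * w + w + 1 = 0" "w \<noteq> 1"
    using primitive_cube_root_exists card q3 by metis
  then interpret primitive_cube_root w by unfold_locales
  have "\<exists>!u. u \<in> Bir i r \<and> adjC u v" if "r \<noteq> 0" "i \<noteq> j" "v \<in> Bir j r" for r i j :: 'a and v
    using Bir_unique_partner[of r j i v] that by (simp add: adjC_sym[of v])
  then show ?thesis
    using Pr_isomorphic Bir_no_edges Bir_unique_partner card_Pr_neighbours card_adjacent_in_nbhd card
    by auto
qed

end
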